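(* Let $f:\mathbb{R}^n\to\mathbb{R}$ be differentiable with $L_f$-Lipschitz continuous gradient, let $g:\mathbb{R}^n\to\mathbb{R}\cup\{+\infty\}$ be proper, lower semicontinuous, $\gamma_g$-prox-bounded and $\rho$-weakly convex, and assume $\operatorname{argmin}(f+g)\neq\emptyset$. Let $x^\star$ be a critical point and $\gamma>0$ sufficiently small, and suppose that $f$ is of class $C^3$ locally around $x^\star$ and $\operatorname{prox}_{\gamma g}$ is of class $C^1$ locally around $x^\star-\gamma\nabla f(x^\star)$. Then there exists a neighborhood $U_{x^\star}$ of $x^\star$ on which $\hat\partial^2\varphi_\gamma(x)$ is a singleton $\{B(x)\}$ with $B(x)=\gamma^{-1}Q_\gamma(x)\big(I-P_\gamma(x)Q_\gamma(x)\big)$, and for all $x\in U_{x^\star}$, $$\|\nabla^2\varphi_\gamma(x)-B(x)\|=\|M_\gamma(x)\|\le\gamma\|\nabla^3 f(x)\|\,\|R_\gamma(x)\|.$$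
   Context: $g$ is $\rho$-weakly convex if $g+\frac\rho2\|\cdot\|^2$ is convex; $\gamma_g$-prox-bounded means $g+\frac1{2\gamma}\|\cdot\|^2$ is bounded below for each $\gamma\in(0,\gamma_g)$. $\operatorname{prox}_{\gamma g}(x)=\operatorname{argmin}_z\{g(z)+\frac1{2\gamma}\|z-x\|^2\}$, $T_\gamma(x)=\operatorname{prox}_{\gamma g}(x-\gamma\nabla f(x))$, $R_\gamma(x)=\gamma^{-1}(x-T_\gamma(x))$; $x^\star$ is critical if $x^\star\in T_\gamma(x^\star)$ for some $\gamma\in(0,\gamma_g)$. Forward-backward envelope: $\varphi_\gamma(x)=\inf_u\{f(x)+\langle\nabla f(x),u-x\rangle+g(u)+\frac1{2\gamma}\|u-x\|^2\}$. $Q_\gamma(x)=I-\gamma\nabla^2 f(x)$, $P_\gamma(x)=J\operatorname{prox}_{\gamma g}(x-\gamma\nabla f(x))$, and $M_\gamma(x)$ is the matrix with entries $[M_\gamma(x)]_{i,k}=-\gamma\sum_j\frac{\partial[\nabla^2f(x)]_{i,j}}{\partial x_k}[R_\gamma(x)]_j$. The generalized Hessian is $\hat\partial^2\varphi_\gamma(x)=\{\gamma^{-1}\mathcal Q(I-\mathcal P\mathcal Q):\mathcal P\in\partial_C\operatorname{prox}_{\gamma g}(x-\gamma\nabla f(x)),\ \mathcal Q\in\partial_C(x-\gamma\nabla f(x))\}$, where $\partial_C$ denotes the Clarke generalized Jacobian. *)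

theory Defs
  imports "HOL-Analysis.Analysis"
begin

text \<open>Ambient space R^n is rendered as real^'n (n = CARD('n)).\<close>

definition grad :: "(real^'n \<Rightarrow> real) \<Rightarrow> real^'n \<Rightarrow> real^'n" where
  "grad f x = (\<chi> i. frechet_derivative f (at x) (axis i 1))"

definition hess :: "(real^'n \<Rightarrow> real) \<Rightarrow> real^'n \<Rightarrow> real^'n^'n" where
  "hess f x = jacobian (grad f) (at x)"

text \<open>third f x i j k = d [hess f]_{ij} / d x_k\<close>
definition third :: "(real^'n \<Rightarrow> real) \<Rightarrow> real^'n \<Rightarrow> 'n \<Rightarrow> 'n \<Rightarrow> 'n \<Rightarrow> real" where
  "third f x i j k = jacobian (\<lambda>y. hess f y $ i) (at x) $ j $ k"

definition C3_on :: "(real^'n) set \<Rightarrow> (real^'n \<Rightarrow> real) \<Rightarrow> bool" where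
  "C3_on S f \<longleftrightarrow> open S \<and>
     (\<forall>x\<in>S. f differentiable at x) \<and>
     (\<forall>x\<in>S. grad f differentiable at x) \<and>
     (\<forall>x\<in>S. hess f differentiable at x) \<and>
     (\<forall>i j k. continuous_on S (\<lambda>x. third f x i j k))"

definition C1_on :: "(real^'n) set \<Rightarrow> (real^'n \<Rightarrow> real^'m) \<Rightarrow> bool" where
  "C1_on S F \<longleftrightarrow> open S \<and> (\<forall>x\<in>S. F differentiable at x) \<and>
     continuous_on S (\<lambda>x. jacobian F (at x))"

definition proper_fun :: "(real^'n \<Rightarrow> ereal) \<Rightarrow> bool" where
  "proper_fun g \<longleftrightarrow> (\<forall>x. g x \<noteq> -\<infinity>) \<and> (\<exists>x. g x < \<infinity>)"

definition lsc_fun :: "(real^'n \<Rightarrow> ereal) \<Rightarrow> bool" where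
  "lsc_fun g \<longleftrightarrow> (\<forall>x. g x \<le> Liminf (at x) g)"

definition ereal_convex :: "(real^'n \<Rightarrow> ereal) \<Rightarrow> bool" where
  "ereal_convex h \<longleftrightarrow> convex {(x, r::real). h x \<le> ereal r}"

definition weakly_convex :: "real \<Rightarrow> (real^'n \<Rightarrow> ereal) \<Rightarrow> bool" where
  "weakly_convex \<rho> g \<longleftrightarrow> ereal_convex (\<lambda>x. g x + ereal (\<rho> / 2 * (norm x)\<^sup>2))"

definition prox_bounded :: "real \<Rightarrow> (real^'n \<Rightarrow> ereal) \<Rightarrow> bool" where
  "prox_bounded \<gamma>g g \<longleftrightarrow> 0 < \<gamma>g \<and>
     (\<forall>\<gamma>. 0 < \<gamma> \<and> \<gamma> < \<gamma>g \<longrightarrow>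
        (\<exists>c::real. \<forall>x. ereal c \<le> g x + ereal ((norm x)\<^sup>2 / (2 * \<gamma>))))"

definition proxset :: "real \<Rightarrow> (real^'n \<Rightarrow> ereal) \<Rightarrow> real^'n \<Rightarrow> (real^'n) set" where
  "proxset \<gamma> g x = {z. \<forall>w. g z + ereal ((norm (z - x))\<^sup>2 / (2 * \<gamma>))
                             \<le> g w + ereal ((norm (w - x))\<^sup>2 / (2 * \<gamma>))}"

definition prox :: "real \<Rightarrow> (real^'n \<Rightarrow> ereal) \<Rightarrow> real^'n \<Rightarrow> real^'n" where
  "prox \<gamma> g x = (THE z. z \<in> proxset \<gamma> g x)"

definition Tset :: "real \<Rightarrow> (real^'n \<Rightarrow> real) \<Rightarrow> (real^'n \<Rightarrow> ereal) \<Rightarrow> real^'n \<Rightarrow> (real^'n) set" where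
  "Tset \<gamma> f g x = proxset \<gamma> g (x - \<gamma> *\<^sub>R grad f x)"

definition Tfb :: "real \<Rightarrow> (real^'n \<Rightarrow> real) \<Rightarrow> (real^'n \<Rightarrow> ereal) \<Rightarrow> real^'n \<Rightarrow> real^'n" where
  "Tfb \<gamma> f g x = prox \<gamma> g (x - \<gamma> *\<^sub>R grad f x)"

definition Rfb :: "real \<Rightarrow> (real^'n \<Rightarrow> real) \<Rightarrow> (real^'n \<Rightarrow> ereal) \<Rightarrow> real^'n \<Rightarrow> real^'n" where
  "Rfb \<gamma> f g x = (1 / \<gamma>) *\<^sub>R (x - Tfb \<gamma> f g x)"

definition critical :: "real \<Rightarrow> (real^'n \<Rightarrow> real) \<Rightarrow> (real^'n \<Rightarrow> ereal) \<Rightarrow> real^'n \<Rightarrow> bool" where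
  "critical \<gamma>g f g xs \<longleftrightarrow> (\<exists>\<gamma>. 0 < \<gamma> \<and> \<gamma> < \<gamma>g \<and> xs \<in> Tset \<gamma> f g xs)"

definition fbe :: "real \<Rightarrow> (real^'n \<Rightarrow> real) \<Rightarrow> (real^'n \<Rightarrow> ereal) \<Rightarrow> real^'n \<Rightarrow> ereal" where
  "fbe \<gamma> f g x = (INF u. ereal (f x + grad f x \<bullet> (u - x) + (norm (u - x))\<^sup>2 / (2 * \<gamma>)) + g u)"

definition fbe_real :: "real \<Rightarrow> (real^'n \<Rightarrow> real) \<Rightarrow> (real^'n \<Rightarrow> ereal) \<Rightarrow> real^'n \<Rightarrow> real" where
  "fbe_real \<gamma> f g x = real_of_ereal (fbe \<gamma> f g x)"

definition Qm :: "real \<Rightarrow> (real^'n \<Rightarrow> real) \<Rightarrow> real^'n \<Rightarrow> real^'n^'n" where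
  "Qm \<gamma> f x = mat 1 - \<gamma> *\<^sub>R hess f x"

definition Pm :: "real \<Rightarrow> (real^'n \<Rightarrow> real) \<Rightarrow> (real^'n \<Rightarrow> ereal) \<Rightarrow> real^'n \<Rightarrow> real^'n^'n" where
  "Pm \<gamma> f g x = jacobian (prox \<gamma> g) (at (x - \<gamma> *\<^sub>R grad f x))"

definition Mm :: "real \<Rightarrow> (real^'n \<Rightarrow> real) \<Rightarrow> (real^'n \<Rightarrow> ereal) \<Rightarrow> real^'n \<Rightarrow> real^'n^'n" where
  "Mm \<gamma> f g x = (\<chi> i k. - \<gamma> * (\<Sum>j\<in>UNIV. third f x i j k * Rfb \<gamma> f g x $ j))"

definition clarke_jac :: "(real^'n \<Rightarrow> real^'m) \<Rightarrow> real^'n \<Rightarrow> (real^'n^'m) set" where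
  "clarke_jac F x = convex hull
     {A. \<exists>xs. xs \<longlonglongrightarrow> x \<and> (\<forall>k. F differentiable at (xs k)) \<and>
              (\<lambda>k. jacobian F (at (xs k))) \<longlonglongrightarrow> A}"

definition gen_hess :: "real \<Rightarrow> (real^'n \<Rightarrow> real) \<Rightarrow> (real^'n \<Rightarrow> ereal) \<Rightarrow> real^'n \<Rightarrow> (real^'n^'n) set" where
  "gen_hess \<gamma> f g x = {(1 / \<gamma>) *\<^sub>R (Q ** (mat 1 - P ** Q)) | P Q.
      P \<in> clarke_jac (prox \<gamma> g) (x - \<gamma> *\<^sub>R grad f x) \<and>
      Q \<in> clarke_jac (\<lambda>y. y - \<gamma> *\<^sub>R grad f y) x}"

definition mat_norm :: "real^'n^'n \<Rightarrow> real" where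
  "mat_norm A = onorm (\<lambda>v. A *v v)"

definition tensor3_norm :: "('n::finite \<Rightarrow> 'n \<Rightarrow> 'n \<Rightarrow> real) \<Rightarrow> real" where
  "tensor3_norm T = (SUP (u, v, w) \<in> {(u::real^'n, v::real^'n, w::real^'n).
        norm u \<le> 1 \<and> norm v \<le> 1 \<and> norm w \<le> 1}.
        \<bar>\<Sum>i\<in>UNIV. \<Sum>j\<in>UNIV. \<Sum>k\<in>UNIV. T i j k * u $ i * v $ j * w $ k\<bar>)"

end

theory Submission
  imports Defs
begin

text \<open>
  For \<open>\<gamma> < \<gamma>g/2\<close> and \<open>\<gamma>\<rho> < 1\<close> the proximal objective is coercive and strongly
  convex, so \<open>prox \<gamma> g\<close> is single valued. Completing the square then writes the envelope as
  \<open>\<phi>(x) = f x - \<gamma>/2 \<parallel>\<nabla>f x\<parallel>\<^sup>2 + e (x - \<gamma>\<nabla>f x)\<close> with \<open>e\<close> the Moreau envelope of \<open>g\<close>,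
  whose gradient is \<open>(z - prox z)/\<gamma>\<close>; by symmetry of \<open>\<nabla>\<^sup>2f\<close> this gives
  \<open>\<nabla>\<phi> = Q R\<close>. Near \<open>x\<^sup>\<star>\<close> both \<open>Q\<close> (\<open>f\<close> is \<open>C\<^sup>3\<close>) and \<open>R\<close> (\<open>prox\<close> is \<open>C\<^sup>1\<close>) are
  differentiable, and the product rule gives \<open>\<nabla>\<^sup>2\<phi> = Q \<partial>R + (\<partial>Q) R = B + M\<close>. Clarke
  Jacobians of \<open>C\<^sup>1\<close> maps are singletons, so the generalized Hessian is \<open>{B}\<close>, and the
  bound on \<open>M\<close> is the defining property of the operator norm of \<open>\<nabla>\<^sup>3f\<close>.
\<close>

section \<open>Matrix calculus\<close>

lemma bounded_bilinear_matrix_vector_mult: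
  "bounded_bilinear (\<lambda>(A::real^'n^'m) (v::real^'n). A *v v)"
  unfolding bilinear_conv_bounded_bilinear[symmetric]
  by (simp add: bilinear_def linear_iff matrix_vector_mult_add_rdistrib matrix_vector_right_distrib
      matrix_vector_mult_scaleR scaleR_matrix_vector_assoc)

lemma matrix_vector_mult_axis_nth: "((A::real^'n^'m) *v axis l 1) $ k = A $ k $ l"
  by (simp add: matrix_vector_mult_basis column_def)

lemma abs_matrix_nth_le_norm: "\<bar>(A::real^'n^'m) $ i $ j\<bar> \<le> norm A"
  by (rule order_trans[OF component_le_norm_cart Finite_Cartesian_Product.norm_nth_le])

lemma jacobian_eqI:
  fixes F :: "real^'n \<Rightarrow> real^'m"
  assumes "(F has_derivative (\<lambda>h. A *v h)) (at y)"
  shows "jacobian F (at y) = A"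
  using assms frechet_derivative_at jacobian_def matrix_of_matrix_vector_mul by metis

lemma linear_axis_expansion:
  fixes D :: "real^'n \<Rightarrow> 'b::real_vector"
  assumes "linear D"
  shows "D h = (\<Sum>k\<in>UNIV. h $ k *\<^sub>R D (axis k 1))"
proof -
  have "D h = D (\<Sum>k\<in>UNIV. h $ k *\<^sub>R axis k 1)"
    by (metis (no_types) basis_expansion scalar_mult_eq_scaleR)
  also have "\<dots> = (\<Sum>k\<in>UNIV. h $ k *\<^sub>R D (axis k 1))"
    by (simp add: linear_sum[OF assms] linear_scale[OF assms])
  finally show ?thesis .
qed

lemma has_derivative_grad:
  fixes f :: "real^'n \<Rightarrow> real"
  assumes "f differentiable at y"
  shows "(f has_derivative (\<lambda>h. grad f y \<bullet> h)) (at y)"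
proof -
  let ?D = "frechet_derivative f (at y)"
  have D: "(f has_derivative ?D) (at y)"
    using assms frechet_derivative_works by blast
  have "?D = (\<lambda>h. grad f y \<bullet> h)"
  proof
    fix h
    show "?D h = grad f y \<bullet> h"
      using linear_axis_expansion[OF has_derivative_linear[OF D], of h]
      by (simp add: grad_def inner_vec_def mult.commute)
  qed
  with D show ?thesis by simp
qed

lemma has_derivative_hess:
  fixes f :: "real^'n \<Rightarrow> real"
  assumes "grad f differentiable at y"
  shows "(grad f has_derivative (\<lambda>h. hess f y *v h)) (at y)"
  using assms jacobian_works unfolding hess_def by blast

section \<open>Symmetry of the Hessian\<close>

lemma axis_mean_value:
  fixes F :: "real^'n \<Rightarrow> real" and D :: "real \<Rightarrow> real^'n"
  assumes F: "\<And>r. 0 \<le> r \<Longrightarrow> r \<le> t \<Longrightarrow> (F has_derivative (\<lambda>h. D r \<bullet> h)) (at (y + r *\<^sub>R axis l 1))"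
    and t: "0 \<le> t"
  shows "\<exists>r\<in>{0..t}. F (y + t *\<^sub>R axis l 1) - F y = t * D r $ l"
proof -
  have "\<exists>r\<in>{0..t}. F (y + t *\<^sub>R axis l 1) - F (y + 0 *\<^sub>R axis l 1) = (t - 0) * D r $ l"
  proof (rule mvt_very_simple[where f = "\<lambda>r. F (y + r *\<^sub>R axis l 1)" and f' = "\<lambda>r h. h * D r $ l", OF t])
    fix r assume r: "0 \<le> r" "r \<le> t"
    have "((\<lambda>r. y + r *\<^sub>R axis l 1) has_derivative (\<lambda>h. h *\<^sub>R axis l 1)) (at r within {0..t})"
      by (auto intro!: derivative_eq_intros)
    from has_derivative_compose[OF this F[OF r]]
    show "((\<lambda>r. F (y + r *\<^sub>R axis l 1)) has_derivative (\<lambda>h. h * D r $ l)) (at r within {0..t})"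
      by (simp add: inner_axis ac_simps)
  qed
  then show ?thesis
    by simp
qed

lemma gradient_component_difference_bound:
  fixes G :: "real^'n \<Rightarrow> real^'m" and H :: "real^'n \<Rightarrow> real^'n^'m"
  assumes G: "\<And>y. y \<in> B \<Longrightarrow> (G has_derivative (\<lambda>h. H y *v h)) (at y)"
    and H: "\<And>y. y \<in> B \<Longrightarrow> \<bar>H y $ k $ l - c\<bar> \<le> \<epsilon>"
    and segment: "\<And>r. 0 \<le> r \<Longrightarrow> r \<le> t \<Longrightarrow> y + r *\<^sub>R axis l 1 \<in> B" and t: "0 \<le> t"
  shows "\<bar>G (y + t *\<^sub>R axis l 1) $ k - G y $ k - t * c\<bar> \<le> \<epsilon> * t"
proof -
  have "((\<lambda>w. G w $ k) has_derivative (\<lambda>h. H (y + r *\<^sub>R axis l 1) $ k \<bullet> h)) (at (y + r *\<^sub>R axis l 1))"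
    if "0 \<le> r" "r \<le> t" for r
    using bounded_linear.has_derivative[OF bounded_linear_vec_nth G[OF segment[OF that]], of k]
    unfolding matrix_vector_mul_component .
  then have "\<exists>r\<in>{0..t}. G (y + t *\<^sub>R axis l 1) $ k - G y $ k = t * H (y + r *\<^sub>R axis l 1) $ k $ l"
    by (rule axis_mean_value[OF _ t])
  then obtain r where r: "0 \<le> r" "r \<le> t"
    and eq: "G (y + t *\<^sub>R axis l 1) $ k - G y $ k = t * H (y + r *\<^sub>R axis l 1) $ k $ l"
    by auto
  have "\<bar>G (y + t *\<^sub>R axis l 1) $ k - G y $ k - t * c\<bar> = t * \<bar>H (y + r *\<^sub>R axis l 1) $ k $ l - c\<bar>"
    using eq t by (simp add: abs_mult right_diff_distrib[symmetric])
  also have "\<dots> \<le> t * \<epsilon>"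
    using H[OF segment[OF r]] t by (simp add: mult_left_mono)
  finally show ?thesis
    by (simp only: mult.commute)
qed

lemma mixed_second_difference_bound:
  fixes f :: "real^'n \<Rightarrow> real" and G :: "real^'n \<Rightarrow> real^'n" and H :: "real^'n \<Rightarrow> real^'n^'n"
  assumes f: "\<And>y. y \<in> ball x \<delta> \<Longrightarrow> (f has_derivative (\<lambda>h. G y \<bullet> h)) (at y)"
    and G: "\<And>y. y \<in> ball x \<delta> \<Longrightarrow> (G has_derivative (\<lambda>h. H y *v h)) (at y)"
    and H: "\<And>y. y \<in> ball x \<delta> \<Longrightarrow> \<bar>H y $ k $ l - c\<bar> \<le> \<epsilon>"
    and t: "0 < t" "2 * t < \<delta>"
  shows "\<bar>f (x + t *\<^sub>R axis k 1 + t *\<^sub>R axis l 1) - f (x + t *\<^sub>R axis k 1)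
           - f (x + t *\<^sub>R axis l 1) + f x - t\<^sup>2 * c\<bar> \<le> \<epsilon> * t\<^sup>2"
proof -
  define u :: "real^'n" where "u = axis k 1"
  define v :: "real^'n" where "v = axis l 1"
  have in_ball: "x + s *\<^sub>R u + r *\<^sub>R v \<in> ball x \<delta>" if "0 \<le> s" "s \<le> t" "0 \<le> r" "r \<le> t" for s r
  proof -
    have "norm (s *\<^sub>R u + r *\<^sub>R v) \<le> s + r"
      using norm_triangle_ineq[of "s *\<^sub>R u" "r *\<^sub>R v"] that by (simp add: u_def v_def)
    moreover have "dist x (x + s *\<^sub>R u + r *\<^sub>R v) = norm (s *\<^sub>R u + r *\<^sub>R v)"
      by (simp add: dist_norm norm_minus_commute add.assoc add.commute)
    ultimately show ?thesis
      using t that by simp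
  qed
  have dF: "((\<lambda>w. f (w + t *\<^sub>R v) - f w) has_derivative (\<lambda>h. (G (w + t *\<^sub>R v) - G w) \<bullet> h)) (at w)"
    if "w + t *\<^sub>R v \<in> ball x \<delta>" "w \<in> ball x \<delta>" for w
  proof -
    have "((\<lambda>w. w + t *\<^sub>R v) has_derivative (\<lambda>h. h)) (at w)"
      by (auto intro!: derivative_eq_intros)
    from has_derivative_compose[OF this f[OF that(1)]]
    have "((\<lambda>w. f (w + t *\<^sub>R v)) has_derivative (\<lambda>h. G (w + t *\<^sub>R v) \<bullet> h)) (at w)" .
    from has_derivative_diff[OF this f[OF that(2)]] show ?thesis
      by (simp add: inner_diff_left)
  qed
  have "\<exists>s\<in>{0..t}. (\<lambda>w. f (w + t *\<^sub>R v) - f w) (x + t *\<^sub>R axis k 1) - (\<lambda>w. f (w + t *\<^sub>R v) - f w) x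
      = t * (\<lambda>s. G (x + s *\<^sub>R axis k 1 + t *\<^sub>R v) - G (x + s *\<^sub>R axis k 1)) s $ k"
  proof (rule axis_mean_value)
    fix r assume r: "0 \<le> r" "r \<le> t"
    have "x + r *\<^sub>R u + t *\<^sub>R v \<in> ball x \<delta>" "x + r *\<^sub>R u \<in> ball x \<delta>"
      using in_ball[OF r] in_ball[OF r, of 0] t by auto
    then show "((\<lambda>w. f (w + t *\<^sub>R v) - f w) has_derivative
        (\<lambda>h. (G (x + r *\<^sub>R axis k 1 + t *\<^sub>R v) - G (x + r *\<^sub>R axis k 1)) \<bullet> h)) (at (x + r *\<^sub>R axis k 1))"
      using dF[of "x + r *\<^sub>R u"] by (simp add: u_def)
  qed (use t in simp)
  then obtain s where s: "0 \<le> s" "s \<le> t" and eq: "f (x + t *\<^sub>R u + t *\<^sub>R v) - f (x + t *\<^sub>R u) - (f (x + t *\<^sub>R v) - f x)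
      = t * (G (x + s *\<^sub>R u + t *\<^sub>R v) $ k - G (x + s *\<^sub>R u) $ k)"
    by (auto simp: u_def)
  have "x + s *\<^sub>R u + r *\<^sub>R axis l 1 \<in> ball x \<delta>" if "0 \<le> r" "r \<le> t" for r
    using in_ball[OF s that] by (simp add: v_def)
  from gradient_component_difference_bound[where B = "ball x \<delta>", OF G H this] t
  have "\<bar>G (x + s *\<^sub>R u + t *\<^sub>R v) $ k - G (x + s *\<^sub>R u) $ k - t * c\<bar> \<le> \<epsilon> * t"
    by (simp add: v_def)
  moreover have "f (x + t *\<^sub>R u + t *\<^sub>R v) - f (x + t *\<^sub>R u) - f (x + t *\<^sub>R v) + f x - t\<^sup>2 * c
      = t * (G (x + s *\<^sub>R u + t *\<^sub>R v) $ k - G (x + s *\<^sub>R u) $ k - t * c)"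
    using eq by (simp add: power2_eq_square algebra_simps)
  ultimately show ?thesis
    using t by (simp add: abs_mult u_def v_def power2_eq_square mult_left_mono)
qed

lemma hess_symmetric:
  fixes f :: "real^'n \<Rightarrow> real"
  assumes S: "open S" "x \<in> S" and f: "\<forall>y\<in>S. f differentiable at y"
    and grad: "\<forall>y\<in>S. grad f differentiable at y" and hess: "isCont (hess f) x"
  shows "hess f x $ k $ l = hess f x $ l $ k"
proof (rule ccontr)
  assume "hess f x $ k $ l \<noteq> hess f x $ l $ k"
  then have d: "\<bar>hess f x $ k $ l - hess f x $ l $ k\<bar> > 0" by simp
  define \<epsilon> where "\<epsilon> = \<bar>hess f x $ k $ l - hess f x $ l $ k\<bar> / 4"
  obtain \<delta>1 where \<delta>1: "\<delta>1 > 0" "ball x \<delta>1 \<subseteq> S"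
    using S open_contains_ball by blast
  obtain \<delta>2 where \<delta>2: "\<delta>2 > 0" "\<And>y. dist y x < \<delta>2 \<Longrightarrow> dist (hess f y) (hess f x) < \<epsilon>"
    using hess d unfolding continuous_at_eps_delta \<epsilon>_def by (metis divide_pos_pos zero_less_numeral)
  define \<delta> where "\<delta> = min \<delta>1 \<delta>2"
  have \<delta>: "\<delta> > 0" and in_S: "ball x \<delta> \<subseteq> S"
    using \<delta>1 \<delta>2 by (auto simp: \<delta>_def)
  have near: "norm (hess f y - hess f x) < \<epsilon>" if "y \<in> ball x \<delta>" for y
    using \<delta>2(2)[of y] that by (simp add: \<delta>_def dist_norm norm_minus_commute)
  have H: "\<bar>hess f y $ i $ j - hess f x $ i $ j\<bar> \<le> \<epsilon>" if "y \<in> ball x \<delta>" for y i j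
    using abs_matrix_nth_le_norm[of "hess f y - hess f x" i j] near[OF that] by simp
  have fd: "\<And>y. y \<in> ball x \<delta> \<Longrightarrow> (f has_derivative (\<lambda>h. grad f y \<bullet> h)) (at y)"
    using f in_S has_derivative_grad by blast
  have gd: "\<And>y. y \<in> ball x \<delta> \<Longrightarrow> (grad f has_derivative (\<lambda>h. hess f y *v h)) (at y)"
    using grad in_S has_derivative_hess by blast
  define t where "t = \<delta> / 4"
  have t: "0 < t" "2 * t < \<delta>" using \<delta> by (auto simp: t_def)
  have kl: "\<bar>f (x + t *\<^sub>R axis k 1 + t *\<^sub>R axis l 1) - f (x + t *\<^sub>R axis k 1)
           - f (x + t *\<^sub>R axis l 1) + f x - t\<^sup>2 * hess f x $ k $ l\<bar> \<le> \<epsilon> * t\<^sup>2"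
    by (rule mixed_second_difference_bound[OF fd gd H t])
  have lk: "\<bar>f (x + t *\<^sub>R axis l 1 + t *\<^sub>R axis k 1) - f (x + t *\<^sub>R axis l 1)
           - f (x + t *\<^sub>R axis k 1) + f x - t\<^sup>2 * hess f x $ l $ k\<bar> \<le> \<epsilon> * t\<^sup>2"
    by (rule mixed_second_difference_bound[OF fd gd H t])
  have swap: "x + t *\<^sub>R axis l 1 + t *\<^sub>R axis k 1 = x + t *\<^sub>R axis k 1 + t *\<^sub>R axis l 1"
    by (simp add: algebra_simps)
  have "\<bar>t\<^sup>2 * hess f x $ k $ l - t\<^sup>2 * hess f x $ l $ k\<bar> \<le> 2 * \<epsilon> * t\<^sup>2"
    using kl lk unfolding swap by linarith
  moreover have "2 * \<epsilon> * t\<^sup>2 < \<bar>t\<^sup>2 * hess f x $ k $ l - t\<^sup>2 * hess f x $ l $ k\<bar>"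
    using t d by (simp add: \<epsilon>_def abs_mult right_diff_distrib[symmetric])
  ultimately show False by linarith
qed

section \<open>The proximal mapping\<close>

lemma lsc_fun_add_continuous_le_of_tendsto:
  fixes g :: "real^'n \<Rightarrow> ereal" and q :: "real^'n \<Rightarrow> real"
  assumes lsc: "lsc_fun g" and q: "isCont q l" and X: "X \<longlonglongrightarrow> l"
    and bound: "eventually (\<lambda>n. g (X n) + ereal (q (X n)) \<le> ereal a) sequentially"
  shows "g l + ereal (q l) \<le> ereal a"
proof (rule ccontr)
  assume gt: "\<not> ?thesis"
  then have "ereal (a - q l) < g l" by (cases "g l") auto
  then obtain b where b: "ereal (a - q l) < ereal b" "ereal b < g l"
    using ereal_dense2 by blast
  have "ereal b < Liminf (at l) g"
    using lsc b(2) unfolding lsc_fun_def by (meson less_le_trans)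
  then have "eventually (\<lambda>y. ereal b < g y) (at l)"
    by (rule less_LiminfD)
  moreover have "eventually (\<lambda>y. a - b < q y) (at l)"
    using q b(1) unfolding isCont_def by (intro order_tendstoD(1)) auto
  ultimately have "eventually (\<lambda>y. ereal a < g y + ereal (q y)) (at l)"
  proof eventually_elim
    case (elim y)
    then show ?case by (cases "g y") auto
  qed
  then have "eventually (\<lambda>y. ereal a < g y + ereal (q y)) (nhds l)"
    using gt by (simp add: eventually_nhds_conv_at)
  then have "eventually (\<lambda>n. ereal a < g (X n) + ereal (q (X n))) sequentially"
    using X by (rule eventually_compose_filterlim)
  with bound have "eventually (\<lambda>n. False) sequentially"
    by eventually_elim auto
  then show False by simp
qed

lemma coercive_bounded_minimizing_sequence:
  fixes G :: "real^'n \<Rightarrow> ereal"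
  assumes dom: "G w0 < \<infinity>" and coercive: "\<And>w. ereal (L + c * (norm w)\<^sup>2) \<le> G w" and c: "0 < c"
  obtains m X where "(INF w. G w) = ereal m" and "\<And>n. G (X n) < ereal (m + 1 / Suc n)"
    and "bounded (range X)"
proof -
  have "(INF w. G w) \<le> G w0"
    by (rule INF_lower) simp
  moreover have "ereal L \<le> (INF w. G w)"
  proof (rule INF_greatest)
    fix w :: "real^'n"
    have "ereal L \<le> ereal (L + c * (norm w)\<^sup>2)"
      using c by simp
    also have "\<dots> \<le> G w"
      by (rule coercive)
    finally show "ereal L \<le> G w" .
  qed
  ultimately obtain m where m: "(INF w. G w) = ereal m"
    using dom by (cases "INF w. G w") auto
  have "\<exists>w. G w < ereal (m + 1 / Suc n)" for n :: nat
  proof -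
    have "(INF w. G w) < ereal (m + 1 / Suc n)"
      using m by simp
    then show ?thesis
      by (simp add: INF_less_iff)
  qed
  then obtain X where X: "\<And>n. G (X n) < ereal (m + 1 / Suc n)"
    by metis
  have "norm (X n) \<le> 1 + (m + 1 - L) / c" for n
  proof -
    have "0 \<le> norm (X n) * norm (X n) - 2 * norm (X n) + 1"
      using zero_le_power2[of "norm (X n) - 1"] by (simp add: power2_eq_square algebra_simps)
    then have "norm (X n) \<le> 1 + (norm (X n))\<^sup>2"
      using norm_ge_zero[of "X n"] unfolding power2_eq_square by linarith
    moreover have "c * (norm (X n))\<^sup>2 \<le> m + 1 - L"
    proof -
      have "ereal (L + c * (norm (X n))\<^sup>2) < ereal (m + 1 / Suc n)"
        using coercive[of "X n"] X[of n] by (rule le_less_trans)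
      then have "L + c * (norm (X n))\<^sup>2 < m + 1 / Suc n"
        by (simp only: less_ereal.simps(1))
      moreover have "1 / real (Suc n) \<le> 1"
        by simp
      ultimately show ?thesis
        by linarith
    qed
    then have "(norm (X n))\<^sup>2 \<le> (m + 1 - L) / c"
      using c by (simp add: pos_le_divide_eq ac_simps)
    ultimately show ?thesis
      by linarith
  qed
  then have "bounded (range X)"
    unfolding bounded_iff by blast
  with m X show ?thesis
    by (rule that)
qed

lemma lsc_fun_add_continuous_has_minimizer:
  fixes g :: "real^'n \<Rightarrow> ereal" and q :: "real^'n \<Rightarrow> real"
  assumes lsc: "lsc_fun g" and q: "\<And>w. isCont q w" and dom: "g w0 < \<infinity>"
    and coercive: "\<And>w. ereal (L + c * (norm w)\<^sup>2) \<le> g w + ereal (q w)" and c: "0 < c"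
  shows "\<exists>l. \<forall>w. g l + ereal (q l) \<le> g w + ereal (q w)"
proof -
  define G where "G w = g w + ereal (q w)" for w
  have "G w0 < \<infinity>"
    using dom by (cases "g w0") (auto simp: G_def)
  then obtain m X where m: "(INF w. G w) = ereal m" and X: "\<And>n. G (X n) < ereal (m + 1 / Suc n)"
    and "bounded (range X)"
    using coercive_bounded_minimizing_sequence[of G w0 L c] coercive c unfolding G_def by blast
  then obtain l r where r: "strict_mono r" and lim: "(X \<circ> r) \<longlonglongrightarrow> l"
    using bounded_imp_convergent_subsequence by blast
  have "G l \<le> ereal m + ereal e" if e: "0 < e" for e
  proof -
    obtain k :: nat where k: "inverse (real (Suc k)) < e"
      using ex_inverse_of_nat_less[OF e] by (metis Suc_pred)
    have "G (X (r n)) \<le> ereal (m + 1 / Suc k)" if "k \<le> n" for n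
    proof -
      have "G (X (r n)) \<le> ereal (m + 1 / Suc (r n))"
        using X[of "r n"] by (rule less_imp_le)
      also have "\<dots> \<le> ereal (m + 1 / Suc k)"
        using seq_suble[OF r, of n] that by (simp add: frac_le)
      finally show ?thesis .
    qed
    then have "eventually (\<lambda>n. g ((X \<circ> r) n) + ereal (q ((X \<circ> r) n)) \<le> ereal (m + 1 / Suc k)) sequentially"
      unfolding eventually_sequentially G_def by auto
    then have "G l \<le> ereal (m + 1 / Suc k)"
      unfolding G_def by (rule lsc_fun_add_continuous_le_of_tendsto[OF lsc q lim])
    also have "\<dots> \<le> ereal m + ereal e"
      using k by (simp add: inverse_eq_divide)
    finally show ?thesis .
  qed
  then have "G l \<le> (INF w. G w)"
    unfolding m by (rule ereal_le_epsilon2)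
  then have "G l \<le> G w" for w
    using INF_lower[of w UNIV G] by simp
  then show ?thesis
    unfolding G_def by blast
qed

text \<open>Prox-boundedness is used at \<open>2\<gamma>\<close>; together with
  \<open>\<parallel>w\<parallel>\<^sup>2 \<le> 3/2 \<parallel>w - z\<parallel>\<^sup>2 + 3 \<parallel>z\<parallel>\<^sup>2\<close> this leaves the quadratic margin \<open>1/(12\<gamma>)\<close>.\<close>

lemma prox_objective_coercive:
  fixes g :: "real^'n \<Rightarrow> ereal"
  assumes pb: "prox_bounded \<gamma>g g" and \<gamma>: "0 < \<gamma>" "2 * \<gamma> < \<gamma>g"
  obtains L where "\<And>w. ereal (L + 1 / (12 * \<gamma>) * (norm w)\<^sup>2) \<le> g w + ereal ((norm (w - z))\<^sup>2 / (2 * \<gamma>))"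
proof -
  obtain c where c: "\<And>w. ereal c \<le> g w + ereal ((norm w)\<^sup>2 / (2 * (2 * \<gamma>)))"
    using pb \<gamma> unfolding prox_bounded_def by (metis mult_pos_pos zero_less_numeral)
  have "ereal (c - (norm z)\<^sup>2 / \<gamma> + 1 / (12 * \<gamma>) * (norm w)\<^sup>2) \<le> g w + ereal ((norm (w - z))\<^sup>2 / (2 * \<gamma>))"
    for w
  proof (cases "g w")
    case (real r)
    have "(norm w)\<^sup>2 \<le> (norm (w - z) + norm z)\<^sup>2"
      using norm_triangle_sub[of w z] by (simp add: power_mono)
    also have "\<dots> \<le> 3/2 * (norm (w - z))\<^sup>2 + 3 * (norm z)\<^sup>2"
      using zero_le_power2[of "norm (w - z) - 2 * norm z"] by (simp add: power2_eq_square algebra_simps)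
    finally have "(norm w)\<^sup>2 / (4 * \<gamma>) + 1 / (12 * \<gamma>) * (norm w)\<^sup>2
        \<le> (norm (w - z))\<^sup>2 / (2 * \<gamma>) + (norm z)\<^sup>2 / \<gamma>"
      using \<gamma> by (simp add: field_simps)
    then show ?thesis
      using c[of w] real by simp
  qed (use c[of w] in auto)
  then show ?thesis by (rule that)
qed

lemma proxset_finite:
  fixes g :: "real^'n \<Rightarrow> ereal"
  assumes proper: "proper_fun g" and p: "p \<in> proxset \<gamma> g z"
  obtains a where "g p = ereal a"
proof -
  obtain w where w: "g w < \<infinity>"
    using proper unfolding proper_fun_def by blast
  have "g p + ereal ((norm (p - z))\<^sup>2 / (2 * \<gamma>)) \<le> g w + ereal ((norm (w - z))\<^sup>2 / (2 * \<gamma>))"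
    using p unfolding proxset_def by blast
  then have "g p \<noteq> \<infinity>"
    using w by auto
  moreover have "g p \<noteq> -\<infinity>"
    using proper unfolding proper_fun_def by blast
  ultimately show ?thesis
    using that by (cases "g p") auto
qed

lemma norm_square_midpoint:
  "(norm ((1/2) *\<^sub>R a + (1/2) *\<^sub>R (b::'a::real_inner)))\<^sup>2
     = (norm a)\<^sup>2 / 2 + (norm b)\<^sup>2 / 2 - (norm (a - b))\<^sup>2 / 4"
  unfolding power2_norm_eq_inner by (simp add: inner_simps inner_commute field_simps)

lemma weakly_convex_midpoint_le:
  fixes g :: "real^'n \<Rightarrow> ereal"
  assumes wc: "weakly_convex \<rho> g" and x: "g x = ereal a" and y: "g y = ereal b"
  shows "g ((1/2) *\<^sub>R x + (1/2) *\<^sub>R y) \<le> ereal (a / 2 + b / 2 + \<rho> / 8 * (norm (x - y))\<^sup>2)"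
proof -
  define E where "E = {(x, r::real). g x + ereal (\<rho> / 2 * (norm x)\<^sup>2) \<le> ereal r}"
  define m where "m = (1/2) *\<^sub>R x + (1/2) *\<^sub>R y"
  have "convex E"
    using wc unfolding weakly_convex_def ereal_convex_def E_def by simp
  moreover have "(x, a + \<rho> / 2 * (norm x)\<^sup>2) \<in> E" "(y, b + \<rho> / 2 * (norm y)\<^sup>2) \<in> E"
    using x y by (simp_all add: E_def)
  ultimately have "(1/2::real) *\<^sub>R (x, a + \<rho> / 2 * (norm x)\<^sup>2) + (1/2::real) *\<^sub>R (y, b + \<rho> / 2 * (norm y)\<^sup>2) \<in> E"
    by (rule convexD) auto
  then have "g m + ereal (\<rho> / 2 * (norm m)\<^sup>2) \<le> ereal ((a + \<rho> / 2 * (norm x)\<^sup>2) / 2 + (b + \<rho> / 2 * (norm y)\<^sup>2) / 2)"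
    by (simp add: E_def m_def)
  then have "g m \<le> ereal ((a + \<rho> / 2 * (norm x)\<^sup>2) / 2 + (b + \<rho> / 2 * (norm y)\<^sup>2) / 2 - \<rho> / 2 * (norm m)\<^sup>2)"
    by (cases "g m") auto
  also have "\<dots> = ereal (a / 2 + b / 2 + \<rho> / 8 * (norm (x - y))\<^sup>2)"
    unfolding m_def norm_square_midpoint by (simp add: field_simps)
  finally show ?thesis
    unfolding m_def .
qed

lemma proxset_unique:
  fixes g :: "real^'n \<Rightarrow> ereal"
  assumes proper: "proper_fun g" and wc: "weakly_convex \<rho> g" and \<gamma>: "0 < \<gamma>" "\<gamma> * \<rho> < 1"
    and p1: "p1 \<in> proxset \<gamma> g z" and p2: "p2 \<in> proxset \<gamma> g z"
  shows "p1 = p2"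
proof -
  define q where "q w = (norm (w - z))\<^sup>2 / (2 * \<gamma>)" for w
  define D where "D = (norm (p1 - p2))\<^sup>2"
  define m where "m = (1/2) *\<^sub>R p1 + (1/2) *\<^sub>R p2"
  have min1: "g p1 + ereal (q p1) \<le> g w + ereal (q w)" for w
    using p1 unfolding proxset_def q_def by blast
  have min2: "g p2 + ereal (q p2) \<le> g w + ereal (q w)" for w
    using p2 unfolding proxset_def q_def by blast
  obtain a1 a2 where a1: "g p1 = ereal a1" and a2: "g p2 = ereal a2"
    using proxset_finite[OF proper p1] proxset_finite[OF proper p2] by metis
  have opt: "a1 + q p1 = a2 + q p2"
    using min1[of p2] min2[of p1] a1 a2 by simp
  have mid: "a1 + q p1 \<le> a1 / 2 + a2 / 2 + \<rho> / 8 * D + q m"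
  proof -
    have "g m \<le> ereal (a1 / 2 + a2 / 2 + \<rho> / 8 * D)"
      using weakly_convex_midpoint_le[OF wc a1 a2] unfolding m_def D_def .
    then show ?thesis
      using min1[of m] a1 by (cases "g m") auto
  qed
  have "m - z = (1/2) *\<^sub>R (p1 - z) + (1/2) *\<^sub>R (p2 - z)"
    by (simp add: m_def vec_eq_iff field_simps)
  then have mz: "(norm (m - z))\<^sup>2 = (norm (p1 - z))\<^sup>2 / 2 + (norm (p2 - z))\<^sup>2 / 2 - D / 4"
    by (simp add: norm_square_midpoint D_def)
  have "q m = q p1 / 2 + q p2 / 2 - D / (8 * \<gamma>)"
    unfolding q_def mz using \<gamma> by (simp add: field_simps)
  then have "D / (8 * \<gamma>) \<le> \<rho> / 8 * D"
    using opt mid by linarith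
  then have "D * (1 - \<gamma> * \<rho>) \<le> 0"
    using \<gamma> by (simp add: field_simps)
  then have "D \<le> 0"
    using \<gamma> by (simp add: mult_le_0_iff)
  then show ?thesis
    by (simp add: D_def)
qed

lemma proxset_nonempty:
  fixes g :: "real^'n \<Rightarrow> ereal"
  assumes proper: "proper_fun g" and lsc: "lsc_fun g" and pb: "prox_bounded \<gamma>g g"
    and \<gamma>: "0 < \<gamma>" "2 * \<gamma> < \<gamma>g"
  shows "\<exists>p. p \<in> proxset \<gamma> g z"
proof -
  obtain L where L: "\<And>w. ereal (L + 1 / (12 * \<gamma>) * (norm w)\<^sup>2) \<le> g w + ereal ((norm (w - z))\<^sup>2 / (2 * \<gamma>))"
    using prox_objective_coercive[OF pb \<gamma>] by blast
  obtain w0 where "g w0 < \<infinity>"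
    using proper unfolding proper_fun_def by blast
  moreover have "isCont (\<lambda>w. (norm (w - z))\<^sup>2 / (2 * \<gamma>)) w" for w
    using \<gamma> by (intro continuous_intros) auto
  ultimately show ?thesis
    using lsc_fun_add_continuous_has_minimizer[OF lsc _ _ L] \<gamma> unfolding proxset_def by auto
qed

lemma prox_in_proxset:
  fixes g :: "real^'n \<Rightarrow> ereal"
  assumes "proper_fun g" "lsc_fun g" "prox_bounded \<gamma>g g" "weakly_convex \<rho> g"
    and "0 < \<gamma>" "2 * \<gamma> < \<gamma>g" "\<gamma> * \<rho> < 1"
  shows "prox \<gamma> g z \<in> proxset \<gamma> g z"
proof -
  have "\<exists>!p. p \<in> proxset \<gamma> g z"
    using proxset_nonempty proxset_unique assms by metis
  then show ?thesis
    unfolding prox_def by (rule theI')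
qed

section \<open>Differentiability of the forward-backward envelope\<close>

lemma envelope_difference_bounds:
  fixes p :: "'a::real_inner \<Rightarrow> 'a" and a e :: "'a \<Rightarrow> real" and y z :: 'a
  assumes \<gamma>: "0 < \<gamma>"
    and e_eq: "\<And>u. e u = a u + (norm (p u - u))\<^sup>2 / (2 * \<gamma>)"
    and e_le: "\<And>u v. e v \<le> a u + (norm (p u - v))\<^sup>2 / (2 * \<gamma>)"
  defines "E \<equiv> e y - e z - ((1 / \<gamma>) *\<^sub>R (z - p z)) \<bullet> (y - z)"
  shows "(norm (y - z))\<^sup>2 / (2 * \<gamma>) - ((p y - p z) \<bullet> (y - z)) / \<gamma> \<le> E"
    and "E \<le> (norm (y - z))\<^sup>2 / (2 * \<gamma>)"
proof -
  define d where "d = y - z"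
  have E_eq: "E = e y - e z + ((p z - z) \<bullet> d) / \<gamma>"
    unfolding E_def d_def by (simp add: inner_diff_left diff_divide_distrib)
  have "(norm (p y - z))\<^sup>2 = (norm (p y - y))\<^sup>2 + 2 * ((p y - y) \<bullet> d) + (norm d)\<^sup>2"
    unfolding d_def power2_norm_eq_inner by (simp add: inner_simps inner_commute)
  then have "- ((p y - y) \<bullet> d) / \<gamma> - (norm d)\<^sup>2 / (2 * \<gamma>) \<le> e y - e z"
    using e_le[where u = y and v = z] e_eq[of y] \<gamma> by (simp add: field_simps)
  moreover have "(p y - y) \<bullet> d = (p y - p z) \<bullet> d + (p z - z) \<bullet> d - (norm d)\<^sup>2"
    unfolding d_def power2_norm_eq_inner by (simp add: inner_simps)
  ultimately show "(norm (y - z))\<^sup>2 / (2 * \<gamma>) - ((p y - p z) \<bullet> (y - z)) / \<gamma> \<le> E"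
    unfolding E_eq d_def[symmetric] using \<gamma> by (simp add: field_simps)
  have "(norm (p z - y))\<^sup>2 = (norm (p z - z))\<^sup>2 - 2 * ((p z - z) \<bullet> d) + (norm d)\<^sup>2"
    unfolding d_def power2_norm_eq_inner by (simp add: inner_simps inner_commute)
  then have "e y - e z \<le> (norm d)\<^sup>2 / (2 * \<gamma>) - ((p z - z) \<bullet> d) / \<gamma>"
    using e_le[where u = z and v = y] e_eq[of z] \<gamma> by (simp add: field_simps)
  then show "E \<le> (norm (y - z))\<^sup>2 / (2 * \<gamma>)"
    unfolding E_eq d_def[symmetric] by linarith
qed

lemma envelope_has_derivative:
  fixes p :: "'a::real_inner \<Rightarrow> 'a" and a e :: "'a \<Rightarrow> real"
  assumes \<gamma>: "0 < \<gamma>"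
    and e_eq: "\<And>u. e u = a u + (norm (p u - u))\<^sup>2 / (2 * \<gamma>)"
    and e_le: "\<And>u v. e v \<le> a u + (norm (p u - v))\<^sup>2 / (2 * \<gamma>)"
    and p: "isCont p z"
  shows "(e has_derivative (\<lambda>h. ((1 / \<gamma>) *\<^sub>R (z - p z)) \<bullet> h)) (at z)"
  unfolding has_derivative_at_alt
proof (intro conjI allI impI)
  show "bounded_linear (\<lambda>h. ((1 / \<gamma>) *\<^sub>R (z - p z)) \<bullet> h)"
    by (rule bounded_linear_inner_right)
next
  fix \<epsilon> :: real assume \<epsilon>: "0 < \<epsilon>"
  obtain \<delta> where \<delta>: "\<delta> > 0" and p_near: "\<And>y. dist y z < \<delta> \<Longrightarrow> dist (p y) (p z) < \<epsilon> * \<gamma>"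
    using p \<epsilon> \<gamma> unfolding continuous_at_eps_delta by (metis mult_pos_pos)
  show "\<exists>\<delta>>0. \<forall>y. norm (y - z) < \<delta> \<longrightarrow>
          norm (e y - e z - ((1 / \<gamma>) *\<^sub>R (z - p z)) \<bullet> (y - z)) \<le> \<epsilon> * norm (y - z)"
  proof (intro exI conjI allI impI)
    show "0 < min \<delta> (2 * \<epsilon> * \<gamma>)"
      using \<delta> \<epsilon> \<gamma> by simp
    fix y assume y: "norm (y - z) < min \<delta> (2 * \<epsilon> * \<gamma>)"
    note bounds = envelope_difference_bounds[OF \<gamma> e_eq e_le, of y z]
    have "(p y - p z) \<bullet> (y - z) \<le> norm (p y - p z) * norm (y - z)"
      by (rule norm_cauchy_schwarz)
    also have "\<dots> \<le> (\<epsilon> * \<gamma>) * norm (y - z)"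
      using p_near[of y] y by (intro mult_right_mono) (auto simp: dist_norm)
    finally have "((p y - p z) \<bullet> (y - z)) / \<gamma> \<le> \<epsilon> * norm (y - z)"
      using \<gamma> by (simp add: pos_divide_le_eq ac_simps)
    moreover have "norm (y - z) * norm (y - z) \<le> (2 * \<epsilon> * \<gamma>) * norm (y - z)"
      using y by (intro mult_right_mono) auto
    then have "(norm (y - z))\<^sup>2 / (2 * \<gamma>) \<le> \<epsilon> * norm (y - z)"
      using \<gamma> by (simp add: power2_eq_square pos_divide_le_eq ac_simps)
    moreover have "0 \<le> (norm (y - z))\<^sup>2 / (2 * \<gamma>)"
      using \<gamma> by simp
    ultimately show "norm (e y - e z - ((1 / \<gamma>) *\<^sub>R (z - p z)) \<bullet> (y - z)) \<le> \<epsilon> * norm (y - z)"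
      using bounds by (simp add: abs_le_iff)
  qed
qed

text \<open>The conversion \<open>real_of_ereal\<close> is harmless: \<open>g\<close> is finite at proximal points
  (\<open>proxset_finite\<close>).\<close>

definition moreau_env :: "real \<Rightarrow> (real^'n \<Rightarrow> ereal) \<Rightarrow> real^'n \<Rightarrow> real" where
  "moreau_env \<gamma> g z = real_of_ereal (g (prox \<gamma> g z)) + (norm (prox \<gamma> g z - z))\<^sup>2 / (2 * \<gamma>)"

lemma moreau_env_has_derivative:
  fixes g :: "real^'n \<Rightarrow> ereal"
  assumes \<gamma>: "0 < \<gamma>" and proper: "proper_fun g" and prox: "\<And>z. prox \<gamma> g z \<in> proxset \<gamma> g z"
    and cont: "isCont (prox \<gamma> g) z"
  shows "(moreau_env \<gamma> g has_derivative (\<lambda>h. ((1 / \<gamma>) *\<^sub>R (z - prox \<gamma> g z)) \<bullet> h)) (at z)"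
proof (rule envelope_has_derivative[OF \<gamma> _ _ cont, where a = "\<lambda>u. real_of_ereal (g (prox \<gamma> g u))"])
  fix u v
  obtain au where au: "g (prox \<gamma> g u) = ereal au"
    using proxset_finite[OF proper prox] by blast
  obtain av where av: "g (prox \<gamma> g v) = ereal av"
    using proxset_finite[OF proper prox] by blast
  have "g (prox \<gamma> g v) + ereal ((norm (prox \<gamma> g v - v))\<^sup>2 / (2 * \<gamma>))
      \<le> g (prox \<gamma> g u) + ereal ((norm (prox \<gamma> g u - v))\<^sup>2 / (2 * \<gamma>))"
    using prox[of v] unfolding proxset_def by blast
  then show "moreau_env \<gamma> g v \<le> real_of_ereal (g (prox \<gamma> g u)) + (norm (prox \<gamma> g u - v))\<^sup>2 / (2 * \<gamma>)"
    by (simp add: moreau_env_def au av)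
qed (simp add: moreau_env_def)

lemma fb_model_complete_square:
  fixes G x u :: "'a::real_inner"
  assumes "0 < \<gamma>"
  shows "G \<bullet> (u - x) + (norm (u - x))\<^sup>2 / (2 * \<gamma>)
       = (norm (u - (x - \<gamma> *\<^sub>R G)))\<^sup>2 / (2 * \<gamma>) - \<gamma> / 2 * (G \<bullet> G)"
proof -
  have "(norm (u - (x - \<gamma> *\<^sub>R G)))\<^sup>2 = (norm (u - x))\<^sup>2 + 2 * \<gamma> * (G \<bullet> (u - x)) + \<gamma>\<^sup>2 * (G \<bullet> G)"
    unfolding power2_norm_eq_inner by (simp add: inner_simps inner_commute power2_eq_square algebra_simps)
  then show ?thesis
    using assms by (simp add: field_simps power2_eq_square)
qed

lemma fbe_real_eq_moreau_env:
  fixes f :: "real^'n \<Rightarrow> real" and g :: "real^'n \<Rightarrow> ereal"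
  assumes \<gamma>: "0 < \<gamma>" and proper: "proper_fun g"
    and prox: "prox \<gamma> g (x - \<gamma> *\<^sub>R grad f x) \<in> proxset \<gamma> g (x - \<gamma> *\<^sub>R grad f x)"
  shows "fbe_real \<gamma> f g x = f x - \<gamma> / 2 * (grad f x \<bullet> grad f x) + moreau_env \<gamma> g (x - \<gamma> *\<^sub>R grad f x)"
proof -
  define z where "z = x - \<gamma> *\<^sub>R grad f x"
  define p where "p = prox \<gamma> g z"
  define c where "c = f x - \<gamma> / 2 * (grad f x \<bullet> grad f x)"
  define q where "q u = (norm (u - z))\<^sup>2 / (2 * \<gamma>)" for u
  obtain a where a: "g p = ereal a"
    using proxset_finite[OF proper prox] unfolding p_def z_def by blast
  have "f x + grad f x \<bullet> (u - x) + (norm (u - x))\<^sup>2 / (2 * \<gamma>) = c + q u" for u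
    using fb_model_complete_square[OF \<gamma>, of "grad f x" u x] unfolding c_def q_def z_def by linarith
  then have model: "ereal (f x + grad f x \<bullet> (u - x) + (norm (u - x))\<^sup>2 / (2 * \<gamma>)) + g u
      = ereal (c + q u) + g u" for u
    by simp
  have p_min: "g p + ereal (q p) \<le> g u + ereal (q u)" for u
    using prox unfolding proxset_def q_def p_def z_def by blast
  have min: "ereal (c + q p) + g p \<le> ereal (c + q u) + g u" for u
    using p_min[of u] a by (cases "g u") auto
  have "fbe \<gamma> f g x = ereal (c + q p) + g p"
    unfolding fbe_def model
    by (rule antisym[OF INF_lower[OF UNIV_I] INF_greatest]) (use min in blast)
  then show ?thesis
    using a by (simp add: fbe_real_def moreau_env_def c_def q_def p_def z_def)
qed

lemma has_derivative_forward_step: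
  fixes f :: "real^'n \<Rightarrow> real"
  assumes "grad f differentiable at x"
  shows "((\<lambda>y. y - \<gamma> *\<^sub>R grad f y) has_derivative (\<lambda>h. Qm \<gamma> f x *v h)) (at x)"
proof -
  have "((\<lambda>y. y - \<gamma> *\<^sub>R grad f y) has_derivative (\<lambda>h. h - \<gamma> *\<^sub>R (hess f x *v h))) (at x)"
    using has_derivative_hess[OF assms]
    by (intro has_derivative_diff has_derivative_ident has_derivative_scaleR_right)
  then show ?thesis
    by (simp add: Qm_def matrix_vector_mult_diff_rdistrib scaleR_matrix_vector_assoc)
qed

lemma fbe_real_has_derivative:
  fixes f :: "real^'n \<Rightarrow> real" and g :: "real^'n \<Rightarrow> ereal"
  assumes \<gamma>: "0 < \<gamma>" and proper: "proper_fun g" and prox: "\<And>z. prox \<gamma> g z \<in> proxset \<gamma> g z"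
    and f: "f differentiable at x" and grad: "grad f differentiable at x"
    and cont: "isCont (prox \<gamma> g) (x - \<gamma> *\<^sub>R grad f x)"
  shows "(fbe_real \<gamma> f g has_derivative (\<lambda>h. Rfb \<gamma> f g x \<bullet> (Qm \<gamma> f x *v h))) (at x)"
proof -
  define z where "z = x - \<gamma> *\<^sub>R grad f x"
  have fbe: "fbe_real \<gamma> f g = (\<lambda>y. f y - \<gamma> / 2 * (grad f y \<bullet> grad f y) + moreau_env \<gamma> g (y - \<gamma> *\<^sub>R grad f y))"
    using fbe_real_eq_moreau_env[OF \<gamma> proper prox] by blast
  have "((\<lambda>y. moreau_env \<gamma> g (y - \<gamma> *\<^sub>R grad f y)) has_derivative
      (\<lambda>h. ((1 / \<gamma>) *\<^sub>R (z - prox \<gamma> g z)) \<bullet> (Qm \<gamma> f x *v h))) (at x)"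
    using has_derivative_compose[OF has_derivative_forward_step[OF grad]
        moreau_env_has_derivative[OF \<gamma> proper prox cont]] by (simp add: z_def)
  moreover have "((\<lambda>y. \<gamma> / 2 * (grad f y \<bullet> grad f y)) has_derivative
      (\<lambda>h. \<gamma> / 2 * (grad f x \<bullet> (hess f x *v h) + (hess f x *v h) \<bullet> grad f x))) (at x)"
    using has_derivative_hess[OF grad] by (intro has_derivative_mult_right has_derivative_inner)
  ultimately have d: "(fbe_real \<gamma> f g has_derivative (\<lambda>h. grad f x \<bullet> h
      - \<gamma> / 2 * (grad f x \<bullet> (hess f x *v h) + (hess f x *v h) \<bullet> grad f x)
      + ((1 / \<gamma>) *\<^sub>R (z - prox \<gamma> g z)) \<bullet> (Qm \<gamma> f x *v h))) (at x)"
    unfolding fbe using has_derivative_grad[OF f] by (intro has_derivative_add has_derivative_diff)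
  show ?thesis
  proof (rule has_derivative_eq_rhs[OF d], rule ext)
    fix h
    have Q: "grad f x \<bullet> (Qm \<gamma> f x *v h) = grad f x \<bullet> h - \<gamma> * (grad f x \<bullet> (hess f x *v h))"
      by (simp add: Qm_def matrix_vector_mult_diff_rdistrib scaleR_matrix_vector_assoc[symmetric] inner_diff_right)
    have R: "(1 / \<gamma>) *\<^sub>R (z - prox \<gamma> g z) = Rfb \<gamma> f g x - grad f x"
      using \<gamma> by (simp add: Rfb_def Tfb_def z_def algebra_simps)
    show "grad f x \<bullet> h - \<gamma> / 2 * (grad f x \<bullet> (hess f x *v h) + (hess f x *v h) \<bullet> grad f x)
        + ((1 / \<gamma>) *\<^sub>R (z - prox \<gamma> g z)) \<bullet> (Qm \<gamma> f x *v h) = Rfb \<gamma> f g x \<bullet> (Qm \<gamma> f x *v h)"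
      unfolding R inner_diff_left Q by (simp add: inner_commute[of "hess f x *v h"] algebra_simps)
  qed
qed

lemma grad_eq_of_has_derivative:
  fixes \<phi> :: "real^'n \<Rightarrow> real"
  assumes "(\<phi> has_derivative (\<lambda>h. r \<bullet> (A *v h))) (at y)"
  shows "grad \<phi> y = transpose A *v r"
proof -
  have "frechet_derivative \<phi> (at y) = (\<lambda>h. r \<bullet> (A *v h))"
    using frechet_derivative_at[OF assms] by simp
  then show ?thesis
    unfolding grad_def
    by (simp add: vec_eq_iff inner_vec_def matrix_vector_mult_axis_nth)
      (simp add: vector_matrix_mult_def ac_simps)
qed

lemma transpose_Qm:
  assumes "\<And>i j. hess f x $ i $ j = hess f x $ j $ i"
  shows "transpose (Qm \<gamma> f x) = Qm \<gamma> f x"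
  using assms by (simp add: Qm_def transpose_def mat_def vec_eq_iff)

section \<open>Second-order behaviour\<close>

lemma clarke_jac_eq_jacobian:
  fixes F :: "real^'n \<Rightarrow> real^'m"
  assumes V: "open V" "x \<in> V" and F: "\<forall>y\<in>V. F differentiable at y"
    and J: "continuous_on V (\<lambda>y. jacobian F (at y))"
  shows "clarke_jac F x = {jacobian F (at x)}"
proof -
  have "{A. \<exists>xs. xs \<longlonglongrightarrow> x \<and> (\<forall>k. F differentiable at (xs k)) \<and>
            (\<lambda>k. jacobian F (at (xs k))) \<longlonglongrightarrow> A} = {jacobian F (at x)}" (is "?limits = _")
  proof (intro equalityI subsetI)
    fix A assume "A \<in> ?limits"
    then obtain X where X: "X \<longlonglongrightarrow> x" "(\<lambda>k. jacobian F (at (X k))) \<longlonglongrightarrow> A"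
      by blast
    have "isCont (\<lambda>y. jacobian F (at y)) x"
      using J V continuous_on_eq_continuous_at by blast
    then have "(\<lambda>k. jacobian F (at (X k))) \<longlonglongrightarrow> jacobian F (at x)"
      using X(1) by (rule isCont_tendsto_compose)
    with X(2) show "A \<in> {jacobian F (at x)}"
      using LIMSEQ_unique by auto
  next
    fix A assume "A \<in> {jacobian F (at x)}"
    then show "A \<in> ?limits"
      using F V by (intro CollectI exI[of _ "\<lambda>k. x"]) auto
  qed
  then show ?thesis
    unfolding clarke_jac_def by simp
qed

definition Bm :: "real \<Rightarrow> (real^'n \<Rightarrow> real) \<Rightarrow> (real^'n \<Rightarrow> ereal) \<Rightarrow> real^'n \<Rightarrow> real^'n^'n" where
  "Bm \<gamma> f g x = (1 / \<gamma>) *\<^sub>R (Qm \<gamma> f x ** (mat 1 - Pm \<gamma> f g x ** Qm \<gamma> f x))"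

lemma has_derivative_Qm:
  fixes f :: "real^'n \<Rightarrow> real"
  assumes "hess f differentiable at x"
  shows "((\<lambda>y. Qm \<gamma> f y) has_derivative (\<lambda>h. - \<gamma> *\<^sub>R frechet_derivative (hess f) (at x) h)) (at x)"
proof -
  have "((\<lambda>y. mat 1 - \<gamma> *\<^sub>R hess f y) has_derivative (\<lambda>h. 0 - \<gamma> *\<^sub>R frechet_derivative (hess f) (at x) h)) (at x)"
    using assms frechet_derivative_works
    by (intro has_derivative_diff has_derivative_const has_derivative_scaleR_right) auto
  then show ?thesis
    by (simp add: Qm_def)
qed

lemma has_derivative_Rfb:
  fixes f :: "real^'n \<Rightarrow> real" and g :: "real^'n \<Rightarrow> ereal"
  assumes grad: "grad f differentiable at x" and prox: "prox \<gamma> g differentiable at (x - \<gamma> *\<^sub>R grad f x)"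
  shows "((\<lambda>y. Rfb \<gamma> f g y) has_derivative (\<lambda>h. (1 / \<gamma>) *\<^sub>R (h - Pm \<gamma> f g x *v (Qm \<gamma> f x *v h)))) (at x)"
proof -
  have "((\<lambda>y. prox \<gamma> g (y - \<gamma> *\<^sub>R grad f y)) has_derivative (\<lambda>h. Pm \<gamma> f g x *v (Qm \<gamma> f x *v h))) (at x)"
    using has_derivative_compose[OF has_derivative_forward_step[OF grad] prox[unfolded jacobian_works]]
    unfolding Pm_def .
  then show ?thesis
    unfolding Rfb_def Tfb_def by (intro has_derivative_scaleR_right has_derivative_diff has_derivative_ident)
qed

lemma third_eq_frechet_derivative:
  fixes f :: "real^'n \<Rightarrow> real"
  assumes "hess f differentiable at x"
  shows "third f x i j k = frechet_derivative (hess f) (at x) (axis k 1) $ i $ j"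
proof -
  have "((\<lambda>y. hess f y $ i) has_derivative (\<lambda>h. frechet_derivative (hess f) (at x) h $ i)) (at x)"
    using assms frechet_derivative_works bounded_linear.has_derivative[OF bounded_linear_vec_nth] by blast
  then have "frechet_derivative (\<lambda>y. hess f y $ i) (at x) = (\<lambda>h. frechet_derivative (hess f) (at x) h $ i)"
    by (rule frechet_derivative_at[symmetric])
  then show ?thesis
    unfolding third_def jacobian_def by (simp add: matrix_def)
qed

lemma hess_derivative_mult_Rfb:
  fixes f :: "real^'n \<Rightarrow> real"
  assumes "hess f differentiable at x"
  shows "(- \<gamma> *\<^sub>R frechet_derivative (hess f) (at x) h) *v Rfb \<gamma> f g x = Mm \<gamma> f g x *v h"
proof -
  let ?D = "frechet_derivative (hess f) (at x)"
  let ?T = "third f x" and ?R = "Rfb \<gamma> f g x"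
  have "linear ?D"
    using assms frechet_derivative_works has_derivative_linear by blast
  then have D: "?D h $ i $ j = (\<Sum>k\<in>UNIV. h $ k * ?T i j k)" for i j
    using linear_axis_expansion[of ?D h] by (simp add: third_eq_frechet_derivative[OF assms] sum_component)
  have "((- \<gamma> *\<^sub>R ?D h) *v ?R) $ i = (Mm \<gamma> f g x *v h) $ i" for i
  proof -
    have "((- \<gamma> *\<^sub>R ?D h) *v ?R) $ i = (\<Sum>j\<in>UNIV. \<Sum>k\<in>UNIV. - \<gamma> * ?T i j k * ?R $ j * h $ k)"
      by (simp add: matrix_vector_mult_def D sum_distrib_left sum_distrib_right sum_negf ac_simps)
    also have "\<dots> = (\<Sum>k\<in>UNIV. \<Sum>j\<in>UNIV. - \<gamma> * ?T i j k * ?R $ j * h $ k)"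
      by (rule sum.swap)
    also have "\<dots> = (Mm \<gamma> f g x *v h) $ i"
      by (simp add: matrix_vector_mult_def Mm_def sum_distrib_left sum_distrib_right ac_simps)
    finally show ?thesis .
  qed
  then show ?thesis
    by (simp add: vec_eq_iff)
qed

lemma has_derivative_Qm_mult_Rfb:
  fixes f :: "real^'n \<Rightarrow> real" and g :: "real^'n \<Rightarrow> ereal"
  assumes hess: "hess f differentiable at x" and grad: "grad f differentiable at x"
    and prox: "prox \<gamma> g differentiable at (x - \<gamma> *\<^sub>R grad f x)"
  shows "((\<lambda>y. Qm \<gamma> f y *v Rfb \<gamma> f g y) has_derivative (\<lambda>h. (Mm \<gamma> f g x + Bm \<gamma> f g x) *v h)) (at x)"
proof -
  have d: "((\<lambda>y. Qm \<gamma> f y *v Rfb \<gamma> f g y) has_derivative (\<lambda>h. Qm \<gamma> f x *v ((1 / \<gamma>) *\<^sub>R (h - Pm \<gamma> f g x *v (Qm \<gamma> f x *v h)))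
      + (- \<gamma> *\<^sub>R frechet_derivative (hess f) (at x) h) *v Rfb \<gamma> f g x)) (at x)"
    using bounded_bilinear.FDERIV[OF bounded_bilinear_matrix_vector_mult has_derivative_Qm[OF hess]
        has_derivative_Rfb[OF grad prox]] by simp
  show ?thesis
  proof (rule has_derivative_eq_rhs[OF d], rule ext)
    fix h
    have B: "Qm \<gamma> f x *v ((1 / \<gamma>) *\<^sub>R (h - Pm \<gamma> f g x *v (Qm \<gamma> f x *v h))) = Bm \<gamma> f g x *v h"
      by (simp add: Bm_def scaleR_matrix_vector_assoc[symmetric] matrix_vector_mult_scaleR
          matrix_vector_mul_assoc[symmetric] matrix_vector_mult_diff_rdistrib matrix_vector_right_distrib)
    show "Qm \<gamma> f x *v ((1 / \<gamma>) *\<^sub>R (h - Pm \<gamma> f g x *v (Qm \<gamma> f x *v h)))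
        + (- \<gamma> *\<^sub>R frechet_derivative (hess f) (at x) h) *v Rfb \<gamma> f g x = (Mm \<gamma> f g x + Bm \<gamma> f g x) *v h"
      unfolding B hess_derivative_mult_Rfb[OF hess] by (simp add: matrix_vector_mult_add_rdistrib)
  qed
qed

definition tensor3_form :: "('n::finite \<Rightarrow> 'n \<Rightarrow> 'n \<Rightarrow> real) \<Rightarrow> real^'n \<Rightarrow> real^'n \<Rightarrow> real^'n \<Rightarrow> real" where
  "tensor3_form T u v w = (\<Sum>i\<in>UNIV. \<Sum>j\<in>UNIV. \<Sum>k\<in>UNIV. T i j k * u $ i * v $ j * w $ k)"

lemma abs_tensor3_form_le_unit:
  fixes T :: "'n::finite \<Rightarrow> 'n \<Rightarrow> 'n \<Rightarrow> real"
  assumes "norm u \<le> 1" "norm v \<le> 1" "norm w \<le> 1"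
  shows "\<bar>tensor3_form T u v w\<bar> \<le> tensor3_norm T"
proof -
  define B where "B = {(u::real^'n, v::real^'n, w::real^'n). norm u \<le> 1 \<and> norm v \<le> 1 \<and> norm w \<le> 1}"
  define F where "F = (\<lambda>(u, v, w). \<bar>tensor3_form T u v w\<bar>)"
  have "F b \<le> (\<Sum>i\<in>UNIV. \<Sum>j\<in>UNIV. \<Sum>k\<in>UNIV. \<bar>T i j k\<bar>)" if b_in: "b \<in> B" for b
  proof -
    obtain u v w where b_eq: "b = (u, v, w)" and unit: "norm u \<le> 1" "norm v \<le> 1" "norm w \<le> 1"
      using b_in unfolding B_def by (cases b) auto
    have "\<bar>u $ i\<bar> \<le> 1" "\<bar>v $ i\<bar> \<le> 1" "\<bar>w $ i\<bar> \<le> 1" for i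
      using unit by (meson component_le_norm_cart order_trans)+
    then have uvw: "\<bar>u $ i\<bar> * \<bar>v $ j\<bar> * \<bar>w $ k\<bar> \<le> 1" for i j k
      by (intro mult_le_one) auto
    have "\<bar>T i j k * u $ i * v $ j * w $ k\<bar> \<le> \<bar>T i j k\<bar>" for i j k
      using mult_right_mono[OF uvw[of i j k] abs_ge_zero[of "T i j k"]] by (simp add: abs_mult ac_simps)
    then show ?thesis
      unfolding F_def b_eq tensor3_form_def by (auto intro!: order_trans[OF sum_abs] sum_mono)
  qed
  then have "F (u, v, w) \<le> (SUP b\<in>B. F b)"
    using assms by (intro cSUP_upper bdd_aboveI2) (auto simp: B_def)
  then show ?thesis
    by (simp add: F_def B_def tensor3_norm_def tensor3_form_def)
qed

lemma tensor3_norm_nonneg: "0 \<le> tensor3_norm (T :: 'n::finite \<Rightarrow> 'n \<Rightarrow> 'n \<Rightarrow> real)"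
  using abs_tensor3_form_le_unit[of 0 0 0 T] by simp

lemma abs_tensor3_form_le:
  fixes T :: "'n::finite \<Rightarrow> 'n \<Rightarrow> 'n \<Rightarrow> real"
  shows "\<bar>tensor3_form T u v w\<bar> \<le> tensor3_norm T * norm u * norm v * norm w"
proof (cases "u = 0 \<or> v = 0 \<or> w = 0")
  case True
  then show ?thesis
    using tensor3_norm_nonneg[of T] by (auto simp: tensor3_form_def)
next
  case False
  then have pos: "norm u > 0" "norm v > 0" "norm w > 0" by auto
  have "tensor3_form T ((1 / norm u) *\<^sub>R u) ((1 / norm v) *\<^sub>R v) ((1 / norm w) *\<^sub>R w)
      = tensor3_form T u v w / (norm u * norm v * norm w)"
    by (simp add: tensor3_form_def sum_distrib_left sum_divide_distrib ac_simps)
  moreover have "\<bar>tensor3_form T ((1 / norm u) *\<^sub>R u) ((1 / norm v) *\<^sub>R v) ((1 / norm w) *\<^sub>R w)\<bar> \<le> tensor3_norm T"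
    using pos by (intro abs_tensor3_form_le_unit) auto
  ultimately show ?thesis
    using pos by (simp add: abs_div pos_divide_le_eq ac_simps)
qed

lemma inner_contraction_eq_tensor3_form:
  fixes T :: "'n::finite \<Rightarrow> 'n \<Rightarrow> 'n \<Rightarrow> real"
  shows "u \<bullet> ((\<chi> i k. - \<gamma> * (\<Sum>j\<in>UNIV. T i j k * r $ j)) *v v) = - \<gamma> * tensor3_form T u r v"
proof -
  have "u \<bullet> ((\<chi> i k. - \<gamma> * (\<Sum>j\<in>UNIV. T i j k * r $ j)) *v v)
      = (\<Sum>i\<in>UNIV. \<Sum>k\<in>UNIV. \<Sum>j\<in>UNIV. - \<gamma> * (T i j k * u $ i * r $ j * v $ k))"
    by (simp add: inner_vec_def matrix_vector_mult_def sum_distrib_left sum_distrib_right ac_simps)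
  also have "\<dots> = (\<Sum>i\<in>UNIV. \<Sum>j\<in>UNIV. \<Sum>k\<in>UNIV. - \<gamma> * (T i j k * u $ i * r $ j * v $ k))"
    by (rule sum.cong[OF refl]) (rule sum.swap)
  also have "\<dots> = - \<gamma> * tensor3_form T u r v"
    by (simp add: tensor3_form_def sum_distrib_left)
  finally show ?thesis .
qed

lemma mat_norm_contraction_le:
  fixes T :: "'n::finite \<Rightarrow> 'n \<Rightarrow> 'n \<Rightarrow> real" and r :: "real^'n"
  assumes \<gamma>: "0 \<le> \<gamma>"
  shows "mat_norm (\<chi> i k. - \<gamma> * (\<Sum>j\<in>UNIV. T i j k * r $ j)) \<le> \<gamma> * tensor3_norm T * norm r"
  unfolding mat_norm_def
proof (rule onorm_le)
  fix v :: "real^'n"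
  define M where "M = (\<chi> i k. - \<gamma> * (\<Sum>j\<in>UNIV. T i j k * r $ j))"
  have "(norm (M *v v))\<^sup>2 = - \<gamma> * tensor3_form T (M *v v) r v"
    unfolding power2_norm_eq_inner M_def by (rule inner_contraction_eq_tensor3_form)
  also have "\<dots> \<le> \<gamma> * \<bar>tensor3_form T (M *v v) r v\<bar>"
    using mult_left_mono[OF abs_ge_minus_self \<gamma>] by simp
  also have "\<dots> \<le> \<gamma> * (tensor3_norm T * norm (M *v v) * norm r * norm v)"
    by (rule mult_left_mono[OF abs_tensor3_form_le \<gamma>])
  finally have "norm (M *v v) * norm (M *v v) \<le> norm (M *v v) * (\<gamma> * tensor3_norm T * norm r * norm v)"
    by (simp add: power2_eq_square ac_simps)
  then show "norm (M *v v) \<le> \<gamma> * tensor3_norm T * norm r * norm v"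
    using \<gamma> tensor3_norm_nonneg[of T] by (cases "M *v v = 0") (auto simp: mult_le_cancel_left)
qed

lemma open_forward_step_preimage:
  fixes f :: "real^'n \<Rightarrow> real"
  assumes f: "C3_on S f" and V: "open V"
  shows "open (S \<inter> {y. y - \<gamma> *\<^sub>R grad f y \<in> V})"
proof -
  have "continuous_on S (grad f)"
    using f unfolding C3_on_def
    by (intro continuous_at_imp_continuous_on) (auto intro: differentiable_imp_continuous_within)
  then have "continuous_on S (\<lambda>y. y - \<gamma> *\<^sub>R grad f y)"
    by (intro continuous_intros)
  then show ?thesis
    using continuous_open_preimage[OF _ _ V] f unfolding C3_on_def vimage_def by blast
qed

lemma gen_hess_eq_Bm:
  fixes f :: "real^'n \<Rightarrow> real" and g :: "real^'n \<Rightarrow> ereal"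
  assumes f: "C3_on S f" and prox: "C1_on V (prox \<gamma> g)"
    and x: "x \<in> S" "x - \<gamma> *\<^sub>R grad f x \<in> V"
  shows "gen_hess \<gamma> f g x = {Bm \<gamma> f g x}"
proof -
  have S: "open S" "\<forall>y\<in>S. grad f differentiable at y" "\<forall>y\<in>S. hess f differentiable at y"
    using f unfolding C3_on_def by auto
  have P: "clarke_jac (prox \<gamma> g) (x - \<gamma> *\<^sub>R grad f x) = {Pm \<gamma> f g x}"
    unfolding Pm_def using prox x by (intro clarke_jac_eq_jacobian) (auto simp: C1_on_def)
  have step: "((\<lambda>y. y - \<gamma> *\<^sub>R grad f y) has_derivative (\<lambda>h. Qm \<gamma> f y *v h)) (at y)" if "y \<in> S" for y
    using has_derivative_forward_step S(2) that by blast
  then have jac: "jacobian (\<lambda>y. y - \<gamma> *\<^sub>R grad f y) (at y) = Qm \<gamma> f y" if "y \<in> S" for y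
    using jacobian_eqI that by blast
  have "continuous_on S (hess f)"
    using S(3) by (intro continuous_at_imp_continuous_on) (auto intro: differentiable_imp_continuous_within)
  then have "continuous_on S (\<lambda>y. Qm \<gamma> f y)"
    unfolding Qm_def by (intro continuous_intros)
  then have "continuous_on S (\<lambda>y. jacobian (\<lambda>y. y - \<gamma> *\<^sub>R grad f y) (at y))"
    using jac by (simp cong: continuous_on_cong)
  moreover have "\<forall>y\<in>S. (\<lambda>y. y - \<gamma> *\<^sub>R grad f y) differentiable at y"
    using step differentiableI by blast
  ultimately have Q: "clarke_jac (\<lambda>y. y - \<gamma> *\<^sub>R grad f y) x = {Qm \<gamma> f x}"
    using jac[OF x(1)] by (simp add: clarke_jac_eq_jacobian[OF S(1) x(1)])
  show ?thesis
    unfolding gen_hess_def P Q Bm_def by auto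
qed

lemma fbe_second_order_near:
  fixes f :: "real^'n \<Rightarrow> real" and g :: "real^'n \<Rightarrow> ereal"
  assumes \<gamma>: "0 < \<gamma>" and proper: "proper_fun g" and prox: "\<And>z. prox \<gamma> g z \<in> proxset \<gamma> g z"
    and f: "C3_on S f" and p: "C1_on V (prox \<gamma> g)"
    and x: "x \<in> S" "x - \<gamma> *\<^sub>R grad f x \<in> V"
  shows "fbe_real \<gamma> f g differentiable at x" and "grad (fbe_real \<gamma> f g) differentiable at x"
    and "hess (fbe_real \<gamma> f g) x = Mm \<gamma> f g x + Bm \<gamma> f g x"
proof -
  define U where "U = S \<inter> {y. y - \<gamma> *\<^sub>R grad f y \<in> V}"
  have U: "open U" "x \<in> U"
    using open_forward_step_preimage[OF f] p x unfolding U_def C1_on_def by auto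
  have S: "open S" "\<forall>y\<in>S. f differentiable at y" "\<forall>y\<in>S. grad f differentiable at y"
    "\<forall>y\<in>S. hess f differentiable at y"
    using f unfolding C3_on_def by auto
  have p_diff: "prox \<gamma> g differentiable at (y - \<gamma> *\<^sub>R grad f y)" if "y \<in> U" for y
    using p that unfolding C1_on_def U_def by auto
  have d: "(fbe_real \<gamma> f g has_derivative (\<lambda>h. Rfb \<gamma> f g y \<bullet> (Qm \<gamma> f y *v h))) (at y)" if "y \<in> U" for y
  proof (rule fbe_real_has_derivative[OF \<gamma> proper prox])
    show "f differentiable at y" "grad f differentiable at y"
      using S(2,3) that by (auto simp: U_def)
    show "isCont (prox \<gamma> g) (y - \<gamma> *\<^sub>R grad f y)"
      using p_diff[OF that] by (rule differentiable_imp_continuous_within)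
  qed
  have grad_fbe: "grad (fbe_real \<gamma> f g) y = Qm \<gamma> f y *v Rfb \<gamma> f g y" if "y \<in> U" for y
  proof -
    have "y \<in> S"
      using that by (simp add: U_def)
    moreover have "isCont (hess f) y"
      using S(4) \<open>y \<in> S\<close> differentiable_imp_continuous_within by blast
    ultimately have "transpose (Qm \<gamma> f y) = Qm \<gamma> f y"
      using hess_symmetric[OF S(1) _ S(2,3)] transpose_Qm by blast
    then show ?thesis
      using grad_eq_of_has_derivative[OF d[OF that]] by simp
  qed
  have "((\<lambda>y. Qm \<gamma> f y *v Rfb \<gamma> f g y) has_derivative (\<lambda>h. (Mm \<gamma> f g x + Bm \<gamma> f g x) *v h)) (at x)"
    using S(3,4) x(1) p_diff[OF U(2)] by (intro has_derivative_Qm_mult_Rfb) auto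
  then have dgrad: "(grad (fbe_real \<gamma> f g) has_derivative (\<lambda>h. (Mm \<gamma> f g x + Bm \<gamma> f g x) *v h)) (at x)"
    by (rule has_derivative_transform_within_open[OF _ U]) (simp add: grad_fbe)
  show "fbe_real \<gamma> f g differentiable at x"
    using d[OF U(2)] by (rule differentiableI)
  show "grad (fbe_real \<gamma> f g) differentiable at x"
    using dgrad by (rule differentiableI)
  show "hess (fbe_real \<gamma> f g) x = Mm \<gamma> f g x + Bm \<gamma> f g x"
    unfolding hess_def by (rule jacobian_eqI[OF dgrad])
qed

lemma fbe_generalized_hessian_local:
  fixes f :: "real^'n \<Rightarrow> real" and g :: "real^'n \<Rightarrow> ereal"
  assumes g: "proper_fun g" "lsc_fun g" "prox_bounded \<gamma>g g" "weakly_convex \<rho> g"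
    and \<gamma>: "0 < \<gamma>" "2 * \<gamma> < \<gamma>g" "\<gamma> * \<rho> < 1"
    and f: "C3_on S f" "xs \<in> S" and p: "C1_on V (prox \<gamma> g)" "xs - \<gamma> *\<^sub>R grad f xs \<in> V"
  shows "\<exists>U. open U \<and> xs \<in> U \<and>
    (\<forall>x\<in>U. gen_hess \<gamma> f g x = {Bm \<gamma> f g x} \<and>
      fbe_real \<gamma> f g differentiable at x \<and> grad (fbe_real \<gamma> f g) differentiable at x \<and>
      mat_norm (hess (fbe_real \<gamma> f g) x - Bm \<gamma> f g x) = mat_norm (Mm \<gamma> f g x) \<and>
      mat_norm (Mm \<gamma> f g x) \<le> \<gamma> * tensor3_norm (third f x) * norm (Rfb \<gamma> f g x))"
proof (intro exI[of _ "S \<inter> {y. y - \<gamma> *\<^sub>R grad f y \<in> V}"] conjI ballI)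
  have prox: "prox \<gamma> g z \<in> proxset \<gamma> g z" for z
    by (rule prox_in_proxset[OF g \<gamma>])
  show "open (S \<inter> {y. y - \<gamma> *\<^sub>R grad f y \<in> V})"
    using open_forward_step_preimage[OF f(1)] p(1) unfolding C1_on_def by blast
  show "xs \<in> S \<inter> {y. y - \<gamma> *\<^sub>R grad f y \<in> V}"
    using f(2) p(2) by simp
  fix x assume "x \<in> S \<inter> {y. y - \<gamma> *\<^sub>R grad f y \<in> V}"
  then have x: "x \<in> S" "x - \<gamma> *\<^sub>R grad f x \<in> V"
    by auto
  note near = fbe_second_order_near[OF \<gamma>(1) g(1) prox f(1) p(1) x]
  show "gen_hess \<gamma> f g x = {Bm \<gamma> f g x}"
    by (rule gen_hess_eq_Bm[OF f(1) p(1) x])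
  show "fbe_real \<gamma> f g differentiable at x" "grad (fbe_real \<gamma> f g) differentiable at x"
    by (fact near(1), fact near(2))
  show "mat_norm (hess (fbe_real \<gamma> f g) x - Bm \<gamma> f g x) = mat_norm (Mm \<gamma> f g x)"
    using near(3) by simp
  show "mat_norm (Mm \<gamma> f g x) \<le> \<gamma> * tensor3_norm (third f x) * norm (Rfb \<gamma> f g x)"
    unfolding Mm_def by (rule mat_norm_contraction_le) (use \<gamma> in simp)
qed

theorem corollary3p5:
  fixes f :: "real^'n \<Rightarrow> real" and g :: "real^'n \<Rightarrow> ereal"
    and Lf \<rho> \<gamma>g :: real and xs :: "real^'n"
  assumes f_diff: "\<forall>x. f differentiable at x"
    and f_lip: "lipschitz_on Lf UNIV (grad f)"
    and g_proper: "proper_fun g"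
    and g_lsc: "lsc_fun g"
    and g_pb: "prox_bounded \<gamma>g g"
    and g_wc: "weakly_convex \<rho> g"
    and argmin_ne: "\<exists>x. \<forall>y. ereal (f x) + g x \<le> ereal (f y) + g y"
    and crit: "critical \<gamma>g f g xs"
    and f_C3: "\<exists>S. xs \<in> S \<and> C3_on S f"
  shows "\<exists>\<gamma>0>0. \<forall>\<gamma>. 0 < \<gamma> \<and> \<gamma> < \<gamma>0 \<longrightarrow>
    (\<exists>V. (xs - \<gamma> *\<^sub>R grad f xs) \<in> V \<and> C1_on V (prox \<gamma> g)) \<longrightarrow>
    (\<exists>U. open U \<and> xs \<in> U \<and>
      (\<forall>x\<in>U.
         gen_hess \<gamma> f g x =
           {(1 / \<gamma>) *\<^sub>R (Qm \<gamma> f x ** (mat 1 - Pm \<gamma> f g x ** Qm \<gamma> f x))} \<and>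
         fbe_real \<gamma> f g differentiable at x \<and>
         grad (fbe_real \<gamma> f g) differentiable at x \<and>
         mat_norm (hess (fbe_real \<gamma> f g) x
                     - (1 / \<gamma>) *\<^sub>R (Qm \<gamma> f x ** (mat 1 - Pm \<gamma> f g x ** Qm \<gamma> f x)))
           = mat_norm (Mm \<gamma> f g x) \<and>
         mat_norm (Mm \<gamma> f g x)
           \<le> \<gamma> * tensor3_norm (third f x) * norm (Rfb \<gamma> f g x)))"
proof -
  obtain S where S: "C3_on S f" "xs \<in> S"
    using f_C3 by blast
  have "0 < \<gamma>g"
    using g_pb unfolding prox_bounded_def by simp
  define \<gamma>0 where "\<gamma>0 = min (\<gamma>g / 2) (1 / (\<bar>\<rho>\<bar> + 1))"
  have "0 < \<gamma>0"
    using \<open>0 < \<gamma>g\<close> by (simp add: \<gamma>0_def)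
  moreover have "2 * \<gamma> < \<gamma>g" "\<gamma> * \<rho> < 1" if "0 < \<gamma>" "\<gamma> < \<gamma>0" for \<gamma>
  proof -
    show "2 * \<gamma> < \<gamma>g"
      using that by (simp add: \<gamma>0_def)
    have "\<gamma> * \<rho> \<le> \<gamma> * \<bar>\<rho>\<bar>"
      using that by (intro mult_left_mono) auto
    moreover have "\<gamma> * \<bar>\<rho>\<bar> + \<gamma> < 1"
      using that by (simp add: \<gamma>0_def pos_less_divide_eq algebra_simps)
    ultimately show "\<gamma> * \<rho> < 1"
      using that by linarith
  qed
  ultimately show ?thesis
    unfolding Bm_def[symmetric]
    using fbe_generalized_hessian_local[OF g_proper g_lsc g_pb g_wc _ _ _ S] by blast
qed

end
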